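(* Let $(\tilde\Theta^n_I)$ be a congruent family of covariant $n$-tensor fields on $\mathcal M_+(I)$, $I$ ranging over finite sets, such that $(\tilde\Theta^n_I)_{\lambda c_I}=0$ for all finite sets $I$ and all $\lambda>0$. Then $\tilde\Theta^n_I=0$ for all finite sets $I$.
   Context: For a finite set $I$: $\mathcal S(I)=\{\sum_{i\in I}x_i\delta_i:x_i\in\mathbb R\}$, $\mathcal M_+(I)=\{\sum\mu_i\delta_i:\mu_i>0\}$ (tangent space $\mathcal S(I)$), $c_I:=\frac1{|I|}\sum_i\delta_i$. A covariant $n$-tensor field on $\mathcal M_+(I)$ is a continuously varying family of $n$-multilinear forms on $\mathcal S(I)$. A Markov kernel $K:I\to\mathcal P(I')$ between finite sets is a stochastic matrix $K(i)=\sum_{i'}K^i_{i'}\delta_{i'}$ with $K_*(\sum x_i\delta_i)=\sum_{i,i'}K^i_{i'}x_i\delta_{i'}$; it is congruent if there is a map $\kappa:I'\to I$ with $K^i_{i'}=0$ whenever $\kappa(i')\ne i$. The family is congruent if $(\tilde\Theta^n_{I'})_{K_*\mu}(K_*V_1,\dots,K_*V_n)=(\tilde\Theta^n_I)_\mu(V_1,\dots,V_n)$ for every congruent Markov kernel $K:I\to\mathcal P(I')$ between finite sets with $K_*(\mathcal M_+(I))\subset\mathcal M_+(I')$. *)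

theory Defs
  imports "HOL-Analysis.Analysis"
begin

text \<open>Finite sets I are finite sets of natural numbers. Signed measures / tangent vectors
  on I are functions nat => real vanishing outside I.\<close>

definition S_I :: "nat set \<Rightarrow> (nat \<Rightarrow> real) set" where
  "S_I I = {x. \<forall>i. i \<notin> I \<longrightarrow> x i = 0}"

definition Mplus :: "nat set \<Rightarrow> (nat \<Rightarrow> real) set" where
  "Mplus I = {\<mu>. (\<forall>i\<in>I. \<mu> i > 0) \<and> (\<forall>i. i \<notin> I \<longrightarrow> \<mu> i = 0)}"

definition cI :: "nat set \<Rightarrow> nat \<Rightarrow> real" where
  "cI I = (\<lambda>i. if i \<in> I then 1 / real (card I) else 0)"

definition markov_kernel :: "nat set \<Rightarrow> nat set \<Rightarrow> (nat \<Rightarrow> nat \<Rightarrow> real) \<Rightarrow> bool" where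
  "markov_kernel I I' K \<longleftrightarrow>
     (\<forall>i\<in>I. \<forall>i'\<in>I'. K i i' \<ge> 0) \<and> (\<forall>i\<in>I. (\<Sum>i'\<in>I'. K i i') = 1)"

definition congruent_kernel :: "nat set \<Rightarrow> nat set \<Rightarrow> (nat \<Rightarrow> nat \<Rightarrow> real) \<Rightarrow> bool" where
  "congruent_kernel I I' K \<longleftrightarrow> markov_kernel I I' K \<and>
     (\<exists>\<kappa>. \<kappa> ` I' \<subseteq> I \<and> (\<forall>i\<in>I. \<forall>i'\<in>I'. \<kappa> i' \<noteq> i \<longrightarrow> K i i' = 0))"

definition pushfwd :: "nat set \<Rightarrow> nat set \<Rightarrow> (nat \<Rightarrow> nat \<Rightarrow> real) \<Rightarrow> (nat \<Rightarrow> real) \<Rightarrow> nat \<Rightarrow> real" where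
  "pushfwd I I' K x = (\<lambda>i'. if i' \<in> I' then (\<Sum>i\<in>I. K i i' * x i) else 0)"

definition cov_tensor_field ::
  "nat \<Rightarrow> nat set \<Rightarrow> ((nat \<Rightarrow> real) \<Rightarrow> (nat \<Rightarrow> real) list \<Rightarrow> real) \<Rightarrow> bool" where
  "cov_tensor_field n I \<Theta> \<longleftrightarrow>
     (\<forall>Vs. length Vs = n \<and> set Vs \<subseteq> S_I I \<longrightarrow> continuous_on (Mplus I) (\<lambda>\<mu>. \<Theta> \<mu> Vs)) \<and>
     (\<forall>\<mu>\<in>Mplus I. \<forall>Vs. length Vs = n \<and> set Vs \<subseteq> S_I I \<longrightarrow>
        (\<forall>j<n. \<forall>x\<in>S_I I. \<forall>y\<in>S_I I. \<forall>a::real.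
           \<Theta> \<mu> (Vs[j := (\<lambda>i. a * x i + y i)]) = a * \<Theta> \<mu> (Vs[j := x]) + \<Theta> \<mu> (Vs[j := y])))"

definition congruent_family ::
  "nat \<Rightarrow> (nat set \<Rightarrow> (nat \<Rightarrow> real) \<Rightarrow> (nat \<Rightarrow> real) list \<Rightarrow> real) \<Rightarrow> bool" where
  "congruent_family n \<Theta> \<longleftrightarrow>
     (\<forall>I I' K. finite I \<and> finite I' \<and> congruent_kernel I I' K \<and>
        pushfwd I I' K ` Mplus I \<subseteq> Mplus I' \<longrightarrow>
        (\<forall>\<mu>\<in>Mplus I. \<forall>Vs. length Vs = n \<and> set Vs \<subseteq> S_I I \<longrightarrow>
           \<Theta> I' (pushfwd I I' K \<mu>) (map (pushfwd I I' K) Vs) = \<Theta> I \<mu> Vs))"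

end

theory Submission imports Defs begin

text \<open>Splitting every atom i of I into k i atoms of equal mass is a congruent Markov kernel,
  and it sends the point with rational masses k i / N to a multiple of the uniform
  distribution on the refined set. By congruence, \<Theta> therefore vanishes at all points with
  rational masses; these are dense in Mplus I, so continuity gives \<Theta> = 0.\<close>

lemma tendsto_fun_componentwise:
  fixes g :: "'b \<Rightarrow> nat \<Rightarrow> real"
  assumes "\<And>i. ((\<lambda>m. g m i) \<longlongrightarrow> l i) F"
  shows "(g \<longlongrightarrow> l) F"
proof -
  have "limitin (product_topology (\<lambda>i. euclidean) UNIV) g l F"
    using assms by (simp add: limitin_componentwise)
  then show ?thesis by (metis euclidean_product_topology limitin_canonical_iff)
qed

lemma ceiling_mult_over_tendsto:
  fixes x :: real
  assumes "x > 0"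
  shows "(\<lambda>m. real (nat \<lceil>real (Suc m) * x\<rceil>) / real (Suc m)) \<longlonglongrightarrow> x"
proof (rule tendsto_sandwich[where f="\<lambda>m. x" and h="\<lambda>m. x + 1 / real (Suc m)"])
  have ceil: "real (nat \<lceil>real (Suc m) * x\<rceil>) = of_int \<lceil>real (Suc m) * x\<rceil>" for m
    using assms by simp
  show "\<forall>\<^sub>F m in sequentially. x \<le> real (nat \<lceil>real (Suc m) * x\<rceil>) / real (Suc m)"
  proof (intro always_eventually allI)
    fix m
    have "real (Suc m) * x \<le> of_int \<lceil>real (Suc m) * x\<rceil>"
      by (rule le_of_int_ceiling)
    then show "x \<le> real (nat \<lceil>real (Suc m) * x\<rceil>) / real (Suc m)"
      unfolding ceil by (simp add: field_simps)
  qed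
  show "\<forall>\<^sub>F m in sequentially.
          real (nat \<lceil>real (Suc m) * x\<rceil>) / real (Suc m) \<le> x + 1 / real (Suc m)"
  proof (intro always_eventually allI)
    fix m
    have "of_int \<lceil>real (Suc m) * x\<rceil> \<le> real (Suc m) * x + 1"
      using ceiling_correct[of "real (Suc m) * x"] by linarith
    then have "of_int \<lceil>real (Suc m) * x\<rceil> / real (Suc m) \<le> (real (Suc m) * x + 1) / real (Suc m)"
      by (rule divide_right_mono) simp
    then show "real (nat \<lceil>real (Suc m) * x\<rceil>) / real (Suc m) \<le> x + 1 / real (Suc m)"
      unfolding ceil by (simp add: add_divide_distrib)
  qed
  show "(\<lambda>m. x + 1 / real (Suc m)) \<longlonglongrightarrow> x"
    using tendsto_add[OF tendsto_const LIMSEQ_Suc[OF lim_const_over_n[of 1]], of x] by simp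
qed simp

definition rational_point :: "nat set \<Rightarrow> (nat \<Rightarrow> nat) \<Rightarrow> nat \<Rightarrow> nat \<Rightarrow> real" where
  "rational_point I k N = (\<lambda>i. if i \<in> I then real (k i) / real N else 0)"

lemma rational_point_in_Mplus:
  "(\<And>i. i \<in> I \<Longrightarrow> k i > 0) \<Longrightarrow> N > 0 \<Longrightarrow> rational_point I k N \<in> Mplus I"
  by (auto simp: Mplus_def rational_point_def)

lemma tendsto_rational_point:
  assumes "\<mu> \<in> Mplus I"
  shows "(\<lambda>m. rational_point I (\<lambda>i. nat \<lceil>real (Suc m) * \<mu> i\<rceil>) (Suc m)) \<longlonglongrightarrow> \<mu>"
proof (rule tendsto_fun_componentwise)
  fix i
  show "(\<lambda>m. rational_point I (\<lambda>i. nat \<lceil>real (Suc m) * \<mu> i\<rceil>) (Suc m) i) \<longlonglongrightarrow> \<mu> i"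
    using assms ceiling_mult_over_tendsto[of "\<mu> i"]
    by (cases "i \<in> I") (auto simp: rational_point_def Mplus_def)
qed

text \<open>The j-th piece (j < k i) of atom i is the pair (i, j), coded as a natural number
  since the finite index sets are sets of naturals.\<close>

definition refine_set :: "nat set \<Rightarrow> (nat \<Rightarrow> nat) \<Rightarrow> nat set" where
  "refine_set I k = prod_encode ` (SIGMA i:I. {..<k i})"

definition refine_kernel :: "(nat \<Rightarrow> nat) \<Rightarrow> nat \<Rightarrow> nat \<Rightarrow> real" where
  "refine_kernel k i i' = (if fst (prod_decode i') = i then 1 / real (k i) else 0)"

lemma mem_refine_set:
  "i' \<in> refine_set I k \<longleftrightarrow>
     fst (prod_decode i') \<in> I \<and> snd (prod_decode i') < k (fst (prod_decode i'))"
proof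
  assume "i' \<in> refine_set I k"
  then show "fst (prod_decode i') \<in> I \<and> snd (prod_decode i') < k (fst (prod_decode i'))"
    unfolding refine_set_def by auto
next
  assume "fst (prod_decode i') \<in> I \<and> snd (prod_decode i') < k (fst (prod_decode i'))"
  then have "prod_decode i' \<in> (SIGMA i:I. {..<k i})" by (cases "prod_decode i'") auto
  then show "i' \<in> refine_set I k"
    unfolding refine_set_def by (metis image_eqI prod_decode_inverse)
qed

lemma finite_refine_set: "finite I \<Longrightarrow> finite (refine_set I k)"
  unfolding refine_set_def by auto

lemma refine_set_nonempty:
  assumes "i \<in> I" "k i > 0"
  shows "refine_set I k \<noteq> {}"
  using assms mem_refine_set[of "prod_encode (i, 0)" I k] by auto

lemma sum_refine_kernel:
  assumes "finite I" "i \<in> I" "k i > 0"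
  shows "(\<Sum>i'\<in>refine_set I k. refine_kernel k i i') = 1"
proof -
  have "inj_on prod_encode (SIGMA i:I. {..<k i})"
    by (meson inj_on_def prod_encode_eq)
  then have "(\<Sum>i'\<in>refine_set I k. refine_kernel k i i')
      = (\<Sum>a\<in>I. \<Sum>j<k a. refine_kernel k i (prod_encode (a, j)))"
    unfolding refine_set_def using assms(1)
    by (simp add: sum.reindex sum.Sigma split_def)
  also have "\<dots> = (\<Sum>j<k i. 1 / real (k i))"
    using assms(1,2) by (simp add: refine_kernel_def if_distrib sum.delta' cong: if_cong)
  also have "\<dots> = 1"
    using assms(3) by simp
  finally show ?thesis .
qed

lemma congruent_refine_kernel:
  assumes "finite I" "\<And>i. i \<in> I \<Longrightarrow> k i > 0"
  shows "congruent_kernel I (refine_set I k) (refine_kernel k)"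
  unfolding congruent_kernel_def markov_kernel_def
proof (intro conjI ballI exI[of _ "\<lambda>i'. fst (prod_decode i')"])
  show "(\<lambda>i'. fst (prod_decode i')) ` refine_set I k \<subseteq> I"
    by (auto simp: mem_refine_set)
  show "(\<Sum>i'\<in>refine_set I k. refine_kernel k i i') = 1" if "i \<in> I" for i
    using sum_refine_kernel assms that by blast
qed (auto simp: refine_kernel_def)

lemma pushfwd_refine_kernel:
  assumes "finite I"
  shows "pushfwd I (refine_set I k) (refine_kernel k) \<nu> i' =
           (if i' \<in> refine_set I k
            then \<nu> (fst (prod_decode i')) / real (k (fst (prod_decode i'))) else 0)"
proof (cases "i' \<in> refine_set I k")
  case True
  then have "fst (prod_decode i') \<in> I" by (simp add: mem_refine_set)
  have "(\<Sum>i\<in>I. refine_kernel k i i' * \<nu> i)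
      = (\<Sum>i\<in>I. if fst (prod_decode i') = i then \<nu> i / real (k i) else 0)"
    unfolding refine_kernel_def by (rule sum.cong) auto
  also have "\<dots> = \<nu> (fst (prod_decode i')) / real (k (fst (prod_decode i')))"
    using \<open>fst (prod_decode i') \<in> I\<close> assms by (simp add: sum.delta)
  finally show ?thesis using True by (simp add: pushfwd_def)
qed (simp add: pushfwd_def)

lemma pushfwd_refine_kernel_Mplus:
  assumes "finite I" "\<And>i. i \<in> I \<Longrightarrow> k i > 0"
  shows "pushfwd I (refine_set I k) (refine_kernel k) ` Mplus I \<subseteq> Mplus (refine_set I k)"
  using assms by (auto simp: Mplus_def pushfwd_refine_kernel mem_refine_set)

lemma pushfwd_refine_kernel_rational_point:
  assumes "finite I" "\<And>i. i \<in> I \<Longrightarrow> k i > 0"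
  shows "pushfwd I (refine_set I k) (refine_kernel k)
           (rational_point I k N)
         = (\<lambda>i'. real (card (refine_set I k)) / real N * cI (refine_set I k) i')"
proof
  fix i'
  have "card (refine_set I k) > 0" if "i' \<in> refine_set I k"
    using that finite_refine_set[OF assms(1)] card_gt_0_iff by blast
  then show "pushfwd I (refine_set I k) (refine_kernel k)
               (rational_point I k N) i'
             = real (card (refine_set I k)) / real N * cI (refine_set I k) i'"
    using assms by (auto simp: pushfwd_refine_kernel mem_refine_set cI_def rational_point_def)
qed

lemma congruent_family_vanishes_at_rational_point:
  fixes \<Theta> :: "nat set \<Rightarrow> (nat \<Rightarrow> real) \<Rightarrow> (nat \<Rightarrow> real) list \<Rightarrow> real"
  assumes cong: "congruent_family n \<Theta>"
    and zero_at_center: "\<And>I (t::real) Vs. finite I \<Longrightarrow> t > 0 \<Longrightarrow> length Vs = n \<Longrightarrow>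
                 set Vs \<subseteq> S_I I \<Longrightarrow> \<Theta> I (\<lambda>i. t * cI I i) Vs = 0"
    and I: "finite I" and k: "\<And>i. i \<in> I \<Longrightarrow> k i > 0" and N: "N > 0"
    and Vs: "length Vs = n" "set Vs \<subseteq> S_I I"
  shows "\<Theta> I (rational_point I k N) Vs = 0"
proof (cases "I = {}")
  case True
  then show ?thesis
    using zero_at_center[OF I, of 1 Vs] Vs by (simp add: cI_def rational_point_def)
next
  case False
  define \<mu> where "\<mu> = rational_point I k N"
  define I' where "I' = refine_set I k"
  define K where "K = pushfwd I I' (refine_kernel k)"
  have I': "finite I'" "I' \<noteq> {}"
    using False I k finite_refine_set refine_set_nonempty unfolding I'_def by blast+
  have "\<mu> \<in> Mplus I"
    unfolding \<mu>_def using k N by (rule rational_point_in_Mplus)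
  then have "\<Theta> I \<mu> Vs = \<Theta> I' (K \<mu>) (map K Vs)"
    using cong I I' Vs congruent_refine_kernel[OF I k] pushfwd_refine_kernel_Mplus[OF I k]
    unfolding congruent_family_def K_def I'_def by simp
  also have "K \<mu> = (\<lambda>i'. real (card I') / real N * cI I' i')"
    unfolding K_def I'_def \<mu>_def by (rule pushfwd_refine_kernel_rational_point[OF I k])
  also have "\<Theta> I' \<dots> (map K Vs) = 0"
  proof (rule zero_at_center)
    show "real (card I') / real N > 0"
      using I' N by (simp add: card_gt_0_iff)
    show "set (map K Vs) \<subseteq> S_I I'"
      by (auto simp: S_I_def K_def pushfwd_def)
  qed (use I' Vs in simp_all)
  finally show ?thesis unfolding \<mu>_def .
qed

theorem lemma4p8:
  fixes n :: nat
    and \<Theta> :: "nat set \<Rightarrow> (nat \<Rightarrow> real) \<Rightarrow> (nat \<Rightarrow> real) list \<Rightarrow> real"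
  assumes fields: "\<And>I. finite I \<Longrightarrow> cov_tensor_field n I (\<Theta> I)"
    and cong: "congruent_family n \<Theta>"
    and zero_at_center: "\<And>I (t::real) Vs. finite I \<Longrightarrow> t > 0 \<Longrightarrow> length Vs = n \<Longrightarrow>
                 set Vs \<subseteq> S_I I \<Longrightarrow> \<Theta> I (\<lambda>i. t * cI I i) Vs = 0"
  shows "\<forall>I. finite I \<longrightarrow> (\<forall>\<mu>\<in>Mplus I. \<forall>Vs. length Vs = n \<and> set Vs \<subseteq> S_I I \<longrightarrow> \<Theta> I \<mu> Vs = 0)"
proof (intro allI impI ballI)
  fix I \<mu> Vs
  assume I: "finite I" and \<mu>: "\<mu> \<in> Mplus I" and Vs: "length Vs = n \<and> set Vs \<subseteq> S_I I"
  define g where "g m = rational_point I (\<lambda>i. nat \<lceil>real (Suc m) * \<mu> i\<rceil>) (Suc m)" for m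
  have k_pos: "nat \<lceil>real (Suc m) * \<mu> i\<rceil> > 0" if "i \<in> I" for m i
    using \<mu> that by (simp add: Mplus_def)
  have "\<Theta> I (g m) Vs = 0" for m
    unfolding g_def using Vs k_pos
    by (intro congruent_family_vanishes_at_rational_point[OF cong zero_at_center I]) auto
  moreover have "continuous_on (Mplus I) (\<lambda>\<nu>. \<Theta> I \<nu> Vs)"
    using fields[OF I] Vs unfolding cov_tensor_field_def by blast
  then have "(\<lambda>m. \<Theta> I (g m) Vs) \<longlonglongrightarrow> \<Theta> I \<mu> Vs"
    using continuous_on_tendsto_compose[OF _ tendsto_rational_point[OF \<mu>] \<mu>]
      rational_point_in_Mplus[OF k_pos] unfolding g_def by simp
  ultimately show "\<Theta> I \<mu> Vs = 0"
    by (simp add: LIMSEQ_const_iff)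
qed

end
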